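(* Let $T$ be a continuous Archimedean $t$-norm, let $A$ be a fuzzy number in $\mathbb R$ with modal value $m=\mathbb M A$, and let $(X_n)_{n\ge1}$ be a sequence of $T$-independent fuzzy variables on a possibility space $(\Omega,\Pi)$, each with membership function $A$. Let $\bar A_n=\frac1n(X_1+\dots+X_n)$ and, for odd $n$, $M_n=\mathrm{median}(X_1,\dots,X_n)$ (defined pointwise on $\Omega$). Then $(\bar A_n)_{n\ge1}$ and $(M_{2n+1})_{n\ge0}$ converge to the constant $m$ in distribution, in measure, and almost surely.
   Context: A possibility space $(\Omega,\Pi)$: $\Pi(S)=\sup_{\omega\in S}\pi(\omega)$ ($\sup\emptyset=0$) for a map $\pi:\Omega\to[0,1]$ attaining $1$. A fuzzy variable is a map $X:\Omega\to\mathbb R$; its membership function is $A_X(y)=\Pi(X^{-1}(y))$. A $t$-norm is a commutative, associative map $T:[0,1]^2\to[0,1]$, non-decreasing in each variable, with neutral element $1$; continuous and Archimedean means continuous and for all $x,y\in(0,1)$ some $n$ gives $T(x,\dots,x)<y$ ($n$ arguments). Fuzzy variables $X_1,X_2,\dots$ are $T$-independent if for all distinct indices $i_1,\dots,i_k$ and all $B_1,\dots,B_k\subseteq\mathbb R$, $\Pi(X_{i_1}\in B_1,\dots,X_{i_k}\in B_k)=T(\Pi(X_{i_1}\in B_1),\dots,\Pi(X_{i_k}\in B_k))$. A fuzzy number is a map $A:\mathbb R\to[0,1]$ whose $\alpha$-cuts $\{A\ge\alpha\}$, $\alpha\in(0,1]$, are nonempty compact intervals and with exactly one point $m$ with $A(m)=1$;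 $\mathbb M A=m$. Convergence to a constant $c$: in distribution means $A_{Y_n}^\alpha\to\{c\}$ in the Hausdorff metric for every $\alpha\in(0,1]$; in measure means $\Pi(|Y_n-c|\ge\epsilon)\to0$ for all $\epsilon>0$; almost surely means $\Pi(\{\omega: Y_n(\omega)\not\to c\})=0$. *)

theory Defs
  imports "HOL-Analysis.Analysis" "HOL-Library.Extended_Real"
begin

definition poss_dist :: "('w \<Rightarrow> real) \<Rightarrow> bool" where
  "poss_dist \<pi> \<longleftrightarrow> (\<forall>\<omega>. 0 \<le> \<pi> \<omega> \<and> \<pi> \<omega> \<le> 1) \<and> (\<exists>\<omega>. \<pi> \<omega> = 1)"

definition Poss :: "('w \<Rightarrow> real) \<Rightarrow> 'w set \<Rightarrow> real" where
  "Poss \<pi> S = (if S = {} then 0 else (SUP \<omega>\<in>S. \<pi> \<omega>))"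

definition membership :: "('w \<Rightarrow> real) \<Rightarrow> ('w \<Rightarrow> real) \<Rightarrow> real \<Rightarrow> real" where
  "membership \<pi> X y = Poss \<pi> (X -` {y})"

definition is_tnorm :: "(real \<Rightarrow> real \<Rightarrow> real) \<Rightarrow> bool" where
  "is_tnorm T \<longleftrightarrow>
     (\<forall>x\<in>{0..1}. \<forall>y\<in>{0..1}. T x y \<in> {0..1}) \<and>
     (\<forall>x\<in>{0..1}. \<forall>y\<in>{0..1}. T x y = T y x) \<and>
     (\<forall>x\<in>{0..1}. \<forall>y\<in>{0..1}. \<forall>z\<in>{0..1}. T (T x y) z = T x (T y z)) \<and>
     (\<forall>x\<in>{0..1}. \<forall>x'\<in>{0..1}. \<forall>y\<in>{0..1}. x \<le> x' \<longrightarrow> T x y \<le> T x' y) \<and>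
     (\<forall>x\<in>{0..1}. T x 1 = x)"

definition tnorm_list :: "(real \<Rightarrow> real \<Rightarrow> real) \<Rightarrow> real list \<Rightarrow> real" where
  "tnorm_list T xs = foldr T xs 1"

definition continuous_archimedean_tnorm :: "(real \<Rightarrow> real \<Rightarrow> real) \<Rightarrow> bool" where
  "continuous_archimedean_tnorm T \<longleftrightarrow>
     is_tnorm T \<and>
     continuous_on ({0..1} \<times> {0..1}) (\<lambda>(x, y). T x y) \<and>
     (\<forall>x\<in>{0<..<1}. \<forall>y\<in>{0<..<1}. \<exists>n. tnorm_list T (replicate n x) < y)"

text \<open>T-independence of the fuzzy variables X_1, X_2, ... (indices >= 1).
  A list ps of pairs (i_j, B_j) with distinct indices encodes the events X_{i_j} in B_j.\<close>
definition T_independent ::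
  "(real \<Rightarrow> real \<Rightarrow> real) \<Rightarrow> ('w \<Rightarrow> real) \<Rightarrow> (nat \<Rightarrow> 'w \<Rightarrow> real) \<Rightarrow> bool" where
  "T_independent T \<pi> X \<longleftrightarrow>
     (\<forall>ps :: (nat \<times> real set) list.
        distinct (map fst ps) \<longrightarrow> (\<forall>i\<in>set (map fst ps). 1 \<le> i) \<longrightarrow>
        Poss \<pi> {\<omega>. \<forall>(i, B)\<in>set ps. X i \<omega> \<in> B} =
        tnorm_list T (map (\<lambda>(i, B). Poss \<pi> {\<omega>. X i \<omega> \<in> B}) ps))"

definition fuzzy_number :: "(real \<Rightarrow> real) \<Rightarrow> bool" where
  "fuzzy_number A \<longleftrightarrow>
     (\<forall>y. 0 \<le> A y \<and> A y \<le> 1) \<and>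
     (\<forall>\<alpha>\<in>{0<..1}. {y. \<alpha> \<le> A y} \<noteq> {} \<and> compact {y. \<alpha> \<le> A y} \<and> is_interval {y. \<alpha> \<le> A y}) \<and>
     (\<exists>!m. A m = 1)"

definition modal_value :: "(real \<Rightarrow> real) \<Rightarrow> real" where
  "modal_value A = (THE m. A m = 1)"

text \<open>Hausdorff distance (extended-real valued, so unbounded/empty sets give infinity).\<close>
definition hausdorff_dist :: "real set \<Rightarrow> real set \<Rightarrow> ereal" where
  "hausdorff_dist S U =
     max (SUP s\<in>S. INF u\<in>U. ereal (dist s u)) (SUP u\<in>U. INF s\<in>S. ereal (dist s u))"

definition alpha_cut :: "(real \<Rightarrow> real) \<Rightarrow> real \<Rightarrow> real set" where
  "alpha_cut A \<alpha> = {y. \<alpha> \<le> A y}"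

definition conv_distribution :: "('w \<Rightarrow> real) \<Rightarrow> (nat \<Rightarrow> 'w \<Rightarrow> real) \<Rightarrow> real \<Rightarrow> bool" where
  "conv_distribution \<pi> Y c \<longleftrightarrow>
     (\<forall>\<alpha>\<in>{0<..1}. (\<lambda>n. hausdorff_dist (alpha_cut (membership \<pi> (Y n)) \<alpha>) {c}) \<longlonglongrightarrow> 0)"

definition conv_measure :: "('w \<Rightarrow> real) \<Rightarrow> (nat \<Rightarrow> 'w \<Rightarrow> real) \<Rightarrow> real \<Rightarrow> bool" where
  "conv_measure \<pi> Y c \<longleftrightarrow>
     (\<forall>\<epsilon>>0. (\<lambda>n. Poss \<pi> {\<omega>. \<epsilon> \<le> \<bar>Y n \<omega> - c\<bar>}) \<longlonglongrightarrow> 0)"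

definition conv_almost_surely :: "('w \<Rightarrow> real) \<Rightarrow> (nat \<Rightarrow> 'w \<Rightarrow> real) \<Rightarrow> real \<Rightarrow> bool" where
  "conv_almost_surely \<pi> Y c \<longleftrightarrow> Poss \<pi> {\<omega>. \<not> ((\<lambda>n. Y n \<omega>) \<longlonglongrightarrow> c)} = 0"

text \<open>Abar_n = (X_1 + ... + X_n)/n (the value at n = 0 is irrelevant for limits).\<close>
definition sample_mean :: "(nat \<Rightarrow> 'w \<Rightarrow> real) \<Rightarrow> nat \<Rightarrow> 'w \<Rightarrow> real" where
  "sample_mean X n \<omega> = (\<Sum>i=1..n. X i \<omega>) / real n"

text \<open>M_{2n+1} = median(X_1, ..., X_{2n+1}), pointwise: the (n+1)-th smallest value.\<close>
definition sample_median_odd :: "(nat \<Rightarrow> 'w \<Rightarrow> real) \<Rightarrow> nat \<Rightarrow> 'w \<Rightarrow> real" where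
  "sample_median_odd X n \<omega> = sort (map (\<lambda>i. X i \<omega>) [1..<2*n+2]) ! n"

end

theory Submission
  imports Defs
begin

text \<open>
  Evaluating
  T-independence on singleton events gives, for every world w and finite index set J,
  pi(w) <= T(A(X_i w) : i in J).  Outside a neighbourhood of m the fuzzy number is bounded
  by some a < 1, and the Archimedean property makes the T-power a^K arbitrarily small.
  Hence in every world of possibility at least eta only boundedly many (fewer than K) of
  the X_i w are far from m, and all of them lie in the compact eta-cut of A.  For the
  sample mean this forces the average into a small neighbourhood of m, and for the
  sample median of 2n+1 values it forces the middle value close to m once n >= K.

  Both statistics therefore converge to m uniformly on every level set {pi >= eta}
  ("levelwise convergence").  Levelwise convergence implies convergence in measure and
  almost surely, and, together with the fact that the statistic takes the value m with
  possibility 1, also convergence in distribution.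
\<close>

section \<open>Powers of a t-norm\<close>

context
  fixes T :: "real \<Rightarrow> real \<Rightarrow> real"
  assumes T: "is_tnorm T"
begin

lemma tnorm_closed: "x \<in> {0..1} \<Longrightarrow> y \<in> {0..1} \<Longrightarrow> T x y \<in> {0..1}"
  using T unfolding is_tnorm_def by blast

lemma tnorm_mono_left:
  "x \<in> {0..1} \<Longrightarrow> x' \<in> {0..1} \<Longrightarrow> y \<in> {0..1} \<Longrightarrow> x \<le> x' \<Longrightarrow> T x y \<le> T x' y"
  using T unfolding is_tnorm_def by blast

lemma tnorm_mono_right:
  "x \<in> {0..1} \<Longrightarrow> y \<in> {0..1} \<Longrightarrow> y' \<in> {0..1} \<Longrightarrow> y \<le> y' \<Longrightarrow> T x y \<le> T x y'"
  using T tnorm_mono_left[of y y' x] unfolding is_tnorm_def by metis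

lemma tnorm_one_right: "x \<in> {0..1} \<Longrightarrow> T x 1 = x"
  using T unfolding is_tnorm_def by blast

lemma tnorm_one_left: "x \<in> {0..1} \<Longrightarrow> T 1 x = x"
  using T unfolding is_tnorm_def by (metis atLeastAtMost_iff order_refl zero_le_one)

lemma tnorm_list_closed: "\<forall>x\<in>set xs. x \<in> {0..1} \<Longrightarrow> tnorm_list T xs \<in> {0..1}"
  by (induction xs) (auto simp: tnorm_list_def intro!: tnorm_closed[simplified])

lemma tnorm_list_ones: "tnorm_list T (replicate k 1) = 1"
  by (induction k) (auto simp: tnorm_list_def tnorm_one_right)

lemma tnorm_list_mono:
  assumes "\<forall>x\<in>set xs. 0 \<le> f x \<and> f x \<le> g x \<and> g x \<le> 1"
  shows "tnorm_list T (map f xs) \<le> tnorm_list T (map g xs)"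
  using assms
proof (induction xs)
  case Nil
  then show ?case by (simp add: tnorm_list_def)
next
  case (Cons x xs)
  have rest: "tnorm_list T (map f xs) \<in> {0..1}" "tnorm_list T (map g xs) \<in> {0..1}"
    using Cons.prems by (intro tnorm_list_closed; force)+
  have "T (f x) (tnorm_list T (map f xs)) \<le> T (g x) (tnorm_list T (map f xs))"
    using Cons.prems rest by (intro tnorm_mono_left) auto
  also have "\<dots> \<le> T (g x) (tnorm_list T (map g xs))"
    using Cons rest by (intro tnorm_mono_right) auto
  finally show ?case by (simp add: tnorm_list_def)
qed

(* Entries equal to 1 are neutral, so only the entries equal to a contribute. *)
lemma tnorm_list_indicator:
  assumes "a \<in> {0..1}"
  shows "tnorm_list T (map (\<lambda>x. if P x then a else 1) xs) = tnorm_list T (replicate (length (filter P xs)) a)"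
proof (induction xs)
  case Nil
  then show ?case by (simp add: tnorm_list_def)
next
  case (Cons x xs)
  have "tnorm_list T (replicate (length (filter P xs)) a) \<in> {0..1}"
    using assms by (intro tnorm_list_closed) auto
  then show ?case using Cons by (auto simp: tnorm_list_def tnorm_one_left)
qed

lemma tnorm_power_antimono:
  assumes "a \<in> {0..1}" "k \<le> k'"
  shows "tnorm_list T (replicate k' a) \<le> tnorm_list T (replicate k a)"
proof (rule lift_Suc_antimono_le[OF _ assms(2)])
  fix n
  have rest: "tnorm_list T (replicate n a) \<in> {0..1}"
    using assms by (intro tnorm_list_closed) auto
  then have "T a (tnorm_list T (replicate n a)) \<le> T 1 (tnorm_list T (replicate n a))"
    using assms by (intro tnorm_mono_left) auto
  then show "tnorm_list T (replicate (Suc n) a) \<le> tnorm_list T (replicate n a)"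
    using rest by (simp add: tnorm_list_def tnorm_one_left)
qed

end

lemma archimedean_power_small:
  assumes "continuous_archimedean_tnorm T" "0 \<le> a" "a < 1" "0 < \<eta>"
  shows "\<exists>K. tnorm_list T (replicate K a) < \<eta>"
proof (cases "a = 0")
  case True
  have "is_tnorm T" using assms(1) unfolding continuous_archimedean_tnorm_def by blast
  then show ?thesis
    using True assms by (intro exI[of _ 1]) (simp add: tnorm_list_def tnorm_one_right)
next
  case False
  have "a \<in> {0<..<1}" "min \<eta> (1/2) \<in> {0<..<1}" using assms False by auto
  then obtain K where "tnorm_list T (replicate K a) < min \<eta> (1/2)"
    using assms(1) unfolding continuous_archimedean_tnorm_def by blast
  then show ?thesis by auto
qed

lemma Poss_least: "0 \<le> c \<Longrightarrow> (\<And>w. w \<in> S \<Longrightarrow> \<pi> w \<le> c) \<Longrightarrow> Poss \<pi> S \<le> c"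
  unfolding Poss_def by (auto intro!: cSUP_least)

lemma Poss_exceeded: "\<eta> < Poss \<pi> S \<Longrightarrow> 0 \<le> \<eta> \<Longrightarrow> \<exists>w\<in>S. \<eta> < \<pi> w"
  using Poss_least[of \<eta> S \<pi>] by (meson not_le)

context
  fixes \<pi> :: "'w \<Rightarrow> real"
  assumes \<pi>: "poss_dist \<pi>"
begin

lemma poss_dist_bounds: "0 \<le> \<pi> w" "\<pi> w \<le> 1"
  using \<pi> unfolding poss_dist_def by auto

lemma Poss_upper: "w \<in> S \<Longrightarrow> \<pi> w \<le> Poss \<pi> S"
  unfolding Poss_def by (auto intro!: cSUP_upper bdd_aboveI[of _ 1] simp: poss_dist_bounds)

lemma Poss_nonneg: "0 \<le> Poss \<pi> S"
  unfolding Poss_def using poss_dist_bounds by (auto intro!: cSUP_upper2 bdd_aboveI[of _ 1])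

lemma Poss_le_one: "Poss \<pi> S \<le> 1"
  by (rule Poss_least) (auto simp: poss_dist_bounds)

lemma Poss_mono: "S \<subseteq> S' \<Longrightarrow> Poss \<pi> S \<le> Poss \<pi> S'"
  by (rule Poss_least[OF Poss_nonneg]) (auto intro: Poss_upper)

end

section \<open>Fuzzy numbers\<close>

context
  fixes A :: "real \<Rightarrow> real"
  assumes A: "fuzzy_number A"
begin

lemma fuzzy_number_bounds: "0 \<le> A y" "A y \<le> 1"
  using A unfolding fuzzy_number_def by auto

lemma modal_value_iff: "A y = 1 \<longleftrightarrow> y = modal_value A"
proof -
  have unique: "\<exists>!m. A m = 1" using A unfolding fuzzy_number_def by blast
  then have "A (modal_value A) = 1" unfolding modal_value_def by (rule theI')
  then show ?thesis using unique by blast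
qed

lemma fuzzy_number_cut_compact: "0 < \<alpha> \<Longrightarrow> \<alpha> \<le> 1 \<Longrightarrow> compact {y. \<alpha> \<le> A y}"
  using A unfolding fuzzy_number_def by auto

(* Away from the modal value the membership function stays below some a < 1: otherwise
   the nested compact sets of far points with degree at least 1 - 1/(k+2) would share a
   point, which then has degree 1 without being the modal value. *)
lemma fuzzy_number_gap:
  assumes "0 < \<delta>"
  shows "\<exists>a. 0 \<le> a \<and> a < 1 \<and> (\<forall>y. \<delta> \<le> \<bar>y - modal_value A\<bar> \<longrightarrow> A y \<le> a)"
proof (rule ccontr)
  assume no_gap: "\<not> ?thesis"
  define \<alpha> :: "nat \<Rightarrow> real" where "\<alpha> k = 1 - inverse (real (Suc (Suc k)))" for k
  define F where "F k = {y. \<alpha> k \<le> A y} \<inter> {y. \<delta> \<le> \<bar>y - modal_value A\<bar>}" for k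
  have \<alpha>: "0 < \<alpha> k" "\<alpha> k < 1" for k
    by (auto simp: \<alpha>_def field_simps)
  have compact: "compact (F k)" for k
  proof -
    have "closed {y. \<delta> \<le> \<bar>y - modal_value A\<bar>}"
      by (intro closed_Collect_le continuous_intros)
    then show ?thesis
      unfolding F_def using \<alpha>[of k] by (intro compact_Int_closed fuzzy_number_cut_compact) auto
  qed
  have nonempty: "F k \<noteq> {}" for k
  proof -
    obtain y where "\<delta> \<le> \<bar>y - modal_value A\<bar>" "\<alpha> k < A y"
      using no_gap \<alpha>[of k] by (meson less_imp_le not_le)
    then have "y \<in> F k" unfolding F_def by simp
    then show ?thesis by blast
  qed
  have decreasing: "F k' \<subseteq> F k" if "k \<le> k'" for k k'
  proof
    fix y assume "y \<in> F k'"
    moreover have "\<alpha> k \<le> \<alpha> k'"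
      unfolding \<alpha>_def using that by (simp add: le_imp_inverse_le)
    ultimately show "y \<in> F k" unfolding F_def by simp
  qed
  have "\<Inter>(range F) \<noteq> {}"
    by (rule compact_nest) (use compact nonempty decreasing in auto)
  then obtain y where y: "\<And>k. y \<in> F k" by blast
  have "(\<lambda>k. \<alpha> k) \<longlonglongrightarrow> 1"
    using LIMSEQ_Suc[OF LIMSEQ_inverse_real_of_nat_add_minus[of 1]] unfolding \<alpha>_def by simp
  then have "1 \<le> A y"
    by (rule LIMSEQ_le_const2) (use y in \<open>auto simp: F_def\<close>)
  then have "y = modal_value A"
    using fuzzy_number_bounds[of y] modal_value_iff by auto
  then show False using y[of 0] assms by (simp add: F_def)
qed

(* Every cut at a positive level is bounded (the level may exceed 1, then the cut is empty). *)
lemma fuzzy_number_cut_bounded: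
  assumes "0 < \<eta>"
  shows "\<exists>R\<ge>0. \<forall>y. \<eta> \<le> A y \<longrightarrow> \<bar>y - modal_value A\<bar> \<le> R"
proof -
  have "0 < min \<eta> 1" using assms by simp
  then obtain B where B: "\<forall>y\<in>{y. min \<eta> 1 \<le> A y}. norm y \<le> B"
    using compact_imp_bounded[OF fuzzy_number_cut_compact] unfolding bounded_iff by force
  have "\<bar>y - modal_value A\<bar> \<le> \<bar>B\<bar> + \<bar>modal_value A\<bar>" if "\<eta> \<le> A y" for y
  proof -
    have "\<bar>y\<bar> \<le> B" using B that by (auto simp: min_le_iff_disj)
    then show ?thesis by linarith
  qed
  then show ?thesis by (intro exI[of _ "\<bar>B\<bar> + \<bar>modal_value A\<bar>"]) auto
qed

end

section \<open>Levelwise convergence\<close>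

text \<open>Y_n converges to c levelwise if, for every eta > 0, the convergence is uniform on
  the worlds of possibility at least eta.  This is the common core of the three
  convergence notions of the theorem.\<close>

definition levelwise_conv :: "('w \<Rightarrow> real) \<Rightarrow> (nat \<Rightarrow> 'w \<Rightarrow> real) \<Rightarrow> real \<Rightarrow> bool" where
  "levelwise_conv \<pi> Y c \<longleftrightarrow>
     (\<forall>\<epsilon>>0. \<forall>\<eta>>0. \<forall>\<^sub>F n in sequentially. \<forall>w. \<eta> \<le> \<pi> w \<longrightarrow> \<bar>Y n w - c\<bar> < \<epsilon>)"

lemma levelwise_convD:
  "levelwise_conv \<pi> Y c \<Longrightarrow> 0 < \<epsilon> \<Longrightarrow> 0 < \<eta> \<Longrightarrow>
     \<exists>N. \<forall>n\<ge>N. \<forall>w. \<eta> \<le> \<pi> w \<longrightarrow> \<bar>Y n w - c\<bar> < \<epsilon>"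
  unfolding levelwise_conv_def eventually_sequentially by blast

(* For every r > 0, the worlds where Y_n deviates by epsilon eventually all have
   possibility at most r/2, hence so has their union. *)
lemma levelwise_conv_imp_conv_measure:
  assumes "poss_dist \<pi>" "levelwise_conv \<pi> Y c"
  shows "conv_measure \<pi> Y c"
  unfolding conv_measure_def
proof (intro allI impI LIMSEQ_I)
  fix \<epsilon> r :: real assume "0 < \<epsilon>" "0 < r"
  then obtain N where N: "\<forall>n\<ge>N. \<forall>w. r/2 \<le> \<pi> w \<longrightarrow> \<bar>Y n w - c\<bar> < \<epsilon>"
    using levelwise_convD[OF assms(2), of \<epsilon> "r/2"] by auto
  have "\<pi> w \<le> r/2" if "N \<le> n" "\<epsilon> \<le> \<bar>Y n w - c\<bar>" for n w
    using N[rule_format, of n w] that by linarith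
  then have "Poss \<pi> {\<omega>. \<epsilon> \<le> \<bar>Y n \<omega> - c\<bar>} \<le> r/2" if "N \<le> n" for n
    using that \<open>0 < r\<close> by (intro Poss_least) auto
  then show "\<exists>N. \<forall>n\<ge>N. norm (Poss \<pi> {\<omega>. \<epsilon> \<le> \<bar>Y n \<omega> - c\<bar>} - 0) < r"
    using Poss_nonneg[OF assms(1)] \<open>0 < r\<close> by (intro exI[of _ N]) force
qed

(* Every world of positive possibility is a world of convergence. *)
lemma levelwise_conv_imp_conv_almost_surely:
  assumes "poss_dist \<pi>" "levelwise_conv \<pi> Y c"
  shows "conv_almost_surely \<pi> Y c"
proof -
  have "(\<lambda>n. Y n w) \<longlonglongrightarrow> c" if "0 < \<pi> w" for w
  proof (rule LIMSEQ_I)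
    fix r :: real assume "0 < r"
    then obtain N where "\<forall>n\<ge>N. \<bar>Y n w - c\<bar> < r"
      using levelwise_convD[OF assms(2) \<open>0 < r\<close> \<open>0 < \<pi> w\<close>] by blast
    then show "\<exists>N. \<forall>n\<ge>N. norm (Y n w - c) < r" by auto
  qed
  then have "Poss \<pi> {\<omega>. \<not> (\<lambda>n. Y n \<omega>) \<longlonglongrightarrow> c} \<le> 0"
    by (intro Poss_least) (auto simp: not_less[symmetric])
  then show ?thesis
    unfolding conv_almost_surely_def using Poss_nonneg[OF assms(1)] by (meson antisym)
qed

lemma hausdorff_dist_nonneg:
  assumes "u \<in> U"
  shows "0 \<le> hausdorff_dist S U"
proof -
  have "0 \<le> (INF s\<in>S. ereal (dist s u))"
    by (rule INF_greatest) simp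
  also have "\<dots> \<le> (SUP u\<in>U. INF s\<in>S. ereal (dist s u))"
    using assms by (rule SUP_upper)
  finally show ?thesis
    unfolding hausdorff_dist_def by (simp add: le_max_iff_disj)
qed

lemma hausdorff_dist_singleton_le:
  assumes "c \<in> S" "\<And>s. s \<in> S \<Longrightarrow> dist s c \<le> e"
  shows "hausdorff_dist S {c} \<le> ereal e"
proof -
  have "(SUP s\<in>S. ereal (dist s c)) \<le> ereal e"
    using assms(2) by (intro SUP_least) simp
  moreover have "(INF s\<in>S. ereal (dist s c)) \<le> ereal e"
    using assms by (intro INF_lower2[of c]) (auto intro: order_trans[OF zero_le_dist])
  ultimately show ?thesis
    unfolding hausdorff_dist_def by (simp add: dist_commute)
qed

(* If Y_n takes the value c with possibility 1, every alpha-cut of Y_n contains c, and by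
   levelwise convergence (at level alpha/2) it is eventually within epsilon of c. *)
lemma levelwise_conv_imp_conv_distribution:
  assumes "levelwise_conv \<pi> Y c"
    and modal: "\<forall>\<^sub>F n in sequentially. membership \<pi> (Y n) c = 1"
  shows "conv_distribution \<pi> Y c"
  unfolding conv_distribution_def
proof (intro ballI order_tendstoI)
  fix \<alpha> :: real and a :: ereal assume \<alpha>: "\<alpha> \<in> {0<..1}"
  show "a < 0 \<Longrightarrow> \<forall>\<^sub>F n in sequentially. a < hausdorff_dist (alpha_cut (membership \<pi> (Y n)) \<alpha>) {c}"
    using hausdorff_dist_nonneg[of c "{c}"] by (intro always_eventually allI) (auto intro: less_le_trans)
  assume "0 < a"
  then obtain \<epsilon> where \<epsilon>: "0 < \<epsilon>" "ereal \<epsilon> < a"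
    using ereal_dense2 by (metis ereal_less(2) less_ereal.simps(1,2) ereal_cases)
  have close: "\<forall>\<^sub>F n in sequentially. \<forall>w. \<alpha>/2 \<le> \<pi> w \<longrightarrow> \<bar>Y n w - c\<bar> < \<epsilon>"
    using assms(1) \<epsilon>(1) \<alpha> unfolding levelwise_conv_def by (meson greaterThanAtMost_iff half_gt_zero)
  show "\<forall>\<^sub>F n in sequentially. hausdorff_dist (alpha_cut (membership \<pi> (Y n)) \<alpha>) {c} < a"
    using close modal
  proof eventually_elim
    case (elim n)
    have "dist s c \<le> \<epsilon>" if "s \<in> alpha_cut (membership \<pi> (Y n)) \<alpha>" for s
    proof -
      have "\<alpha>/2 < Poss \<pi> (Y n -` {s})"
        using that \<alpha> unfolding alpha_cut_def membership_def by auto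
      then obtain w where "Y n w = s" "\<alpha>/2 < \<pi> w"
        using Poss_exceeded \<alpha> by fastforce
      then show ?thesis using elim(1) unfolding dist_real_def by (metis less_imp_le)
    qed
    moreover have "c \<in> alpha_cut (membership \<pi> (Y n)) \<alpha>"
      using elim(2) \<alpha> by (simp add: alpha_cut_def)
    ultimately show ?case
      using hausdorff_dist_singleton_le \<epsilon>(2) by (meson order.strict_trans1)
  qed
qed

lemma sum_deviation_bound:
  fixes x :: "'a \<Rightarrow> real" and R \<delta> :: real
  assumes "finite J" "0 \<le> R" "0 \<le> \<delta>"
    and bounded: "\<And>i. i \<in> J \<Longrightarrow> \<bar>x i - c\<bar> \<le> R"
    and few: "card {i\<in>J. \<delta> \<le> \<bar>x i - c\<bar>} \<le> K"
  shows "(\<Sum>i\<in>J. \<bar>x i - c\<bar>) \<le> K * R + \<delta> * card J"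
proof -
  define D where "D = {i\<in>J. \<delta> \<le> \<bar>x i - c\<bar>}"
  have "(\<Sum>i\<in>J. \<bar>x i - c\<bar>) \<le> (\<Sum>i\<in>J. if i \<in> D then R else \<delta>)"
    using bounded by (intro sum_mono) (auto simp: D_def)
  also have "\<dots> = R * card (J \<inter> D) + \<delta> * card (J - D)"
    using assms(1) by (simp add: sum.If_cases Diff_eq)
  also have "\<dots> \<le> R * K + \<delta> * card J"
  proof (intro add_mono mult_left_mono)
    show "real (card (J \<inter> D)) \<le> real K"
      using few by (simp add: D_def Int_absorb1)
    show "real (card (J - D)) \<le> real (card J)"
      using assms(1) by (simp add: card_mono)
  qed (use assms in auto)
  finally show ?thesis by (simp add: mult.commute)
qed

(* If the median of 2n+1 values is epsilon-far from c, then so are at least n+1 of the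
   values: all those on the same side of the median. *)
lemma median_deviation_count:
  fixes xs :: "real list"
  assumes len: "length xs = 2*n+1" and far: "\<epsilon> \<le> \<bar>sort xs ! n - c\<bar>"
  shows "n + 1 \<le> length (filter (\<lambda>x. \<epsilon> \<le> \<bar>x - c\<bar>) xs)"
proof -
  define s where "s = sort xs"
  define P where "P x \<longleftrightarrow> \<epsilon> \<le> \<bar>x - c\<bar>" for x
  have ls: "length s = 2*n+1" and srt: "sorted s" using len by (simp_all add: s_def)
  have "length (filter P xs) = length (filter P s)"
    unfolding s_def by (metis mset_filter mset_sort size_mset)
  also have "\<dots> = card {j. j < length s \<and> P (s ! j)}"
    by (rule length_filter_conv_card)
  finally have count: "length (filter P xs) = card {j. j < length s \<and> P (s ! j)}" .
  consider "c + \<epsilon> \<le> s ! n" | "s ! n \<le> c - \<epsilon>"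
    using far unfolding s_def by linarith
  then have "n + 1 \<le> card {j. j < length s \<and> P (s ! j)}"
  proof cases
    case 1
    have "{n..<2*n+1} \<subseteq> {j. j < length s \<and> P (s ! j)}"
    proof
      fix j assume j: "j \<in> {n..<2*n+1}"
      then have "s ! n \<le> s ! j" using sorted_nth_mono[OF srt, of n j] ls by auto
      then show "j \<in> {j. j < length s \<and> P (s ! j)}" using 1 j ls unfolding P_def by auto
    qed
    from card_mono[OF _ this] show ?thesis by simp
  next
    case 2
    have "{0..n} \<subseteq> {j. j < length s \<and> P (s ! j)}"
    proof
      fix j assume j: "j \<in> {0..n}"
      then have "s ! j \<le> s ! n" using sorted_nth_mono[OF srt, of j n] ls by auto
      then show "j \<in> {j. j < length s \<and> P (s ! j)}" using 2 j ls unfolding P_def by auto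
    qed
    from card_mono[OF _ this] show ?thesis by simp
  qed
  then show ?thesis using count unfolding P_def by simp
qed

section \<open>T-independent copies of a fuzzy number\<close>

locale T_independent_copies =
  fixes T :: "real \<Rightarrow> real \<Rightarrow> real"
    and A :: "real \<Rightarrow> real"
    and \<pi> :: "'w \<Rightarrow> real"
    and X :: "nat \<Rightarrow> 'w \<Rightarrow> real"
  assumes tnorm: "continuous_archimedean_tnorm T"
    and fuzzy: "fuzzy_number A"
    and poss: "poss_dist \<pi>"
    and indep: "T_independent T \<pi> X"
    and identical: "\<forall>n\<ge>1. membership \<pi> (X n) = A"
begin

abbreviation m :: real where "m \<equiv> modal_value A"

lemma is_tnorm: "is_tnorm T"
  using tnorm unfolding continuous_archimedean_tnorm_def by blast

(* T-independence applied to the singleton events X_i = y_i, i in J. *)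
lemma joint_possibility:
  assumes "finite J" "J \<subseteq> {1..}"
  shows "Poss \<pi> {\<omega>. \<forall>i\<in>J. X i \<omega> = y i} = tnorm_list T (map (\<lambda>i. A (y i)) (sorted_list_of_set J))"
proof -
  define ps where "ps = map (\<lambda>i. (i, {y i})) (sorted_list_of_set J)"
  have "map fst ps = sorted_list_of_set J"
    unfolding ps_def by (simp add: comp_def)
  then have "distinct (map fst ps)" "\<forall>i\<in>set (map fst ps). 1 \<le> i"
    using assms by auto
  then have "Poss \<pi> {\<omega>. \<forall>(i, B)\<in>set ps. X i \<omega> \<in> B} =
      tnorm_list T (map (\<lambda>(i, B). Poss \<pi> {\<omega>. X i \<omega> \<in> B}) ps)"
    using indep unfolding T_independent_def by blast
  moreover have "{\<omega>. \<forall>(i, B)\<in>set ps. X i \<omega> \<in> B} = {\<omega>. \<forall>i\<in>J. X i \<omega> = y i}"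
    using assms(1) unfolding ps_def by auto
  moreover have "map (\<lambda>(i, B). Poss \<pi> {\<omega>. X i \<omega> \<in> B}) ps = map (\<lambda>i. A (y i)) (sorted_list_of_set J)"
    using assms identical unfolding ps_def membership_def by (auto simp: vimage_def)
  ultimately show ?thesis by simp
qed

lemma possibility_bound:
  assumes "finite J" "J \<subseteq> {1..}"
  shows "\<pi> w \<le> tnorm_list T (map (\<lambda>i. A (X i w)) (sorted_list_of_set J))"
  using Poss_upper[OF poss, of w "{\<omega>. \<forall>i\<in>J. X i \<omega> = X i w}"] joint_possibility[OF assms] by simp

(* Bounding each degree by a (far values) or 1 (near values) gives a T-power of a. *)
lemma possibility_le_deviation_power:
  assumes "finite J" "J \<subseteq> {1..}" "0 \<le> a" "a \<le> 1"
    and gap: "\<forall>y. \<delta> \<le> \<bar>y - m\<bar> \<longrightarrow> A y \<le> a"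
  shows "\<pi> w \<le> tnorm_list T (replicate (card {i\<in>J. \<delta> \<le> \<bar>X i w - m\<bar>}) a)"
proof -
  let ?I = "sorted_list_of_set J" and ?P = "\<lambda>i. \<delta> \<le> \<bar>X i w - m\<bar>"
  have "\<pi> w \<le> tnorm_list T (map (\<lambda>i. A (X i w)) ?I)"
    by (rule possibility_bound[OF assms(1,2)])
  also have "\<dots> \<le> tnorm_list T (map (\<lambda>i. if ?P i then a else 1) ?I)"
    using gap assms(3,4) fuzzy_number_bounds[OF fuzzy]
    by (intro tnorm_list_mono[OF is_tnorm]) auto
  also have "\<dots> = tnorm_list T (replicate (length (filter ?P ?I)) a)"
    using assms(3,4) by (intro tnorm_list_indicator[OF is_tnorm]) auto
  also have "length (filter ?P ?I) = card {i\<in>J. ?P i}"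
    using assms(1) by (simp add: distinct_length_filter Int_commute Collect_conj_eq)
  finally show ?thesis .
qed

lemma few_large_deviations:
  assumes "0 < \<delta>" "0 < \<eta>"
  obtains K where "\<And>J w. finite J \<Longrightarrow> J \<subseteq> {1..} \<Longrightarrow> \<eta> \<le> \<pi> w \<Longrightarrow>
    card {i\<in>J. \<delta> \<le> \<bar>X i w - m\<bar>} < K"
proof -
  obtain a where a: "0 \<le> a" "a < 1" "\<forall>y. \<delta> \<le> \<bar>y - m\<bar> \<longrightarrow> A y \<le> a"
    using fuzzy_number_gap[OF fuzzy assms(1)] by blast
  obtain K where K: "tnorm_list T (replicate K a) < \<eta>"
    using archimedean_power_small[OF tnorm a(1,2) assms(2)] by blast
  have "card {i\<in>J. \<delta> \<le> \<bar>X i w - m\<bar>} < K"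
    if "finite J" "J \<subseteq> {1..}" "\<eta> \<le> \<pi> w" for J w
  proof (rule ccontr)
    assume "\<not> ?thesis"
    then have "tnorm_list T (replicate (card {i\<in>J. \<delta> \<le> \<bar>X i w - m\<bar>}) a) \<le> tnorm_list T (replicate K a)"
      using a by (intro tnorm_power_antimono[OF is_tnorm]) auto
    moreover have "\<pi> w \<le> tnorm_list T (replicate (card {i\<in>J. \<delta> \<le> \<bar>X i w - m\<bar>}) a)"
      using that a by (intro possibility_le_deviation_power) auto
    ultimately show False using K that(3) by linarith
  qed
  then show ?thesis by (rule that)
qed

(* In a world of possibility at least eta all values lie in the eta-cut of A. *)
lemma level_values_bounded:
  assumes "0 < \<eta>"
  obtains R where "0 \<le> R" "\<And>i w. 1 \<le> i \<Longrightarrow> \<eta> \<le> \<pi> w \<Longrightarrow> \<bar>X i w - m\<bar> \<le> R"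
proof -
  obtain R where R: "0 \<le> R" "\<forall>y. \<eta> \<le> A y \<longrightarrow> \<bar>y - m\<bar> \<le> R"
    using fuzzy_number_cut_bounded[OF fuzzy assms] by blast
  have dominated: "\<pi> w \<le> A (X i w)" if "1 \<le> i" for i w
    using possibility_bound[of "{i}" w] that fuzzy_number_bounds[OF fuzzy]
    by (simp add: tnorm_list_def tnorm_one_right[OF is_tnorm])
  show ?thesis
  proof (rule that[OF R(1)])
    fix i :: nat and w assume "1 \<le> i" "\<eta> \<le> \<pi> w"
    then have "\<eta> \<le> A (X i w)" using dominated by (meson order_trans)
    then show "\<bar>X i w - m\<bar> \<le> R" using R(2) by blast
  qed
qed

lemma modal_statistic:
  assumes "finite J" "J \<subseteq> {1..}" and modal: "\<And>\<omega>. \<forall>i\<in>J. X i \<omega> = m \<Longrightarrow> Y \<omega> = m"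
  shows "membership \<pi> Y m = 1"
proof (rule antisym)
  show "membership \<pi> Y m \<le> 1"
    unfolding membership_def by (rule Poss_le_one[OF poss])
  have "A m = 1" using modal_value_iff[OF fuzzy] by simp
  then have "1 = Poss \<pi> {\<omega>. \<forall>i\<in>J. X i \<omega> = m}"
    using joint_possibility[OF assms(1,2), of "\<lambda>_. m"]
    by (simp add: map_replicate_const tnorm_list_ones[OF is_tnorm])
  also have "\<dots> \<le> Poss \<pi> (Y -` {m})"
    using modal by (intro Poss_mono[OF poss]) auto
  finally show "1 \<le> membership \<pi> Y m" unfolding membership_def .
qed

section \<open>Sample mean and sample median\<close>

(* Fewer than K summands deviate by epsilon/2 or more and all are within R of m, so the mean
   is within K R / n + epsilon/2 of m. *)
lemma sample_mean_levelwise: "levelwise_conv \<pi> (sample_mean X) m"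
  unfolding levelwise_conv_def
proof (intro allI impI)
  fix \<epsilon> \<eta> :: real assume "0 < \<epsilon>" "0 < \<eta>"
  define \<delta> where "\<delta> = \<epsilon> / 2"
  have "0 < \<delta>" using \<open>0 < \<epsilon>\<close> by (simp add: \<delta>_def)
  obtain K where K: "\<And>J w. finite J \<Longrightarrow> J \<subseteq> {1..} \<Longrightarrow> \<eta> \<le> \<pi> w \<Longrightarrow>
      card {i\<in>J. \<delta> \<le> \<bar>X i w - m\<bar>} < K"
    using few_large_deviations[OF \<open>0 < \<delta>\<close> \<open>0 < \<eta>\<close>] by blast
  obtain R where R: "0 \<le> R" "\<And>i w. 1 \<le> i \<Longrightarrow> \<eta> \<le> \<pi> w \<Longrightarrow> \<bar>X i w - m\<bar> \<le> R"
    using level_values_bounded[OF \<open>0 < \<eta>\<close>] by blast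
  obtain N :: nat where N: "real K * R / \<delta> < N"
    using reals_Archimedean2 by blast
  show "\<forall>\<^sub>F n in sequentially. \<forall>w. \<eta> \<le> \<pi> w \<longrightarrow> \<bar>sample_mean X n w - m\<bar> < \<epsilon>"
    unfolding eventually_sequentially
  proof (intro exI[of _ "max N 1"] allI impI)
    fix n w assume n: "max N 1 \<le> n" and w: "\<eta> \<le> \<pi> w"
    have "0 < real n" using n by simp
    have "real K * R < \<delta> * N"
      using N \<open>0 < \<delta>\<close> by (simp add: divide_less_eq mult.commute)
    also have "\<dots> \<le> \<delta> * n"
      using n \<open>0 < \<delta>\<close> by simp
    finally have "real K * R < \<delta> * n" .
    have "card {i\<in>{1..n}. \<delta> \<le> \<bar>X i w - m\<bar>} \<le> K"
      using K[of "{1..n}" w] w by fastforce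
    then have deviation: "(\<Sum>i=1..n. \<bar>X i w - m\<bar>) \<le> K * R + \<delta> * n"
      using sum_deviation_bound[of "{1..n}" R \<delta> "\<lambda>i. X i w" m K] R w \<open>0 < \<delta>\<close> by simp
    have "\<bar>sample_mean X n w - m\<bar> = \<bar>\<Sum>i=1..n. X i w - m\<bar> / n"
      using \<open>0 < real n\<close> by (simp add: sample_mean_def sum_subtractf field_simps)
    also have "\<dots> \<le> (\<Sum>i=1..n. \<bar>X i w - m\<bar>) / n"
      by (intro divide_right_mono sum_abs) simp
    also have "\<dots> \<le> (K * R + \<delta> * n) / n"
      by (intro divide_right_mono deviation) simp
    also have "\<dots> < (\<delta> * n + \<delta> * n) / n"
      using \<open>real K * R < \<delta> * n\<close> \<open>0 < real n\<close> by (intro divide_strict_right_mono) auto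
    also have "\<dots> = \<epsilon>"
      using \<open>0 < real n\<close> by (simp add: \<delta>_def field_simps)
    finally show "\<bar>sample_mean X n w - m\<bar> < \<epsilon>" .
  qed
qed

lemma sample_mean_modal: "1 \<le> n \<Longrightarrow> membership \<pi> (sample_mean X n) m = 1"
  by (rule modal_statistic[of "{1..n}"]) (auto simp: sample_mean_def)

(* A median epsilon-far from m would need n + 1 >= K far values. *)
lemma sample_median_levelwise: "levelwise_conv \<pi> (sample_median_odd X) m"
  unfolding levelwise_conv_def
proof (intro allI impI)
  fix \<epsilon> \<eta> :: real assume "0 < \<epsilon>" "0 < \<eta>"
  obtain K where K: "\<And>J w. finite J \<Longrightarrow> J \<subseteq> {1..} \<Longrightarrow> \<eta> \<le> \<pi> w \<Longrightarrow>
      card {i\<in>J. \<epsilon> \<le> \<bar>X i w - m\<bar>} < K"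
    using few_large_deviations[OF \<open>0 < \<epsilon>\<close> \<open>0 < \<eta>\<close>] by blast
  show "\<forall>\<^sub>F n in sequentially. \<forall>w. \<eta> \<le> \<pi> w \<longrightarrow> \<bar>sample_median_odd X n w - m\<bar> < \<epsilon>"
    unfolding eventually_sequentially
  proof (intro exI[of _ K] allI impI)
    fix n w assume n: "K \<le> n" and w: "\<eta> \<le> \<pi> w"
    show "\<bar>sample_median_odd X n w - m\<bar> < \<epsilon>"
    proof (rule ccontr)
      let ?xs = "map (\<lambda>i. X i w) [1..<2*n+2]"
      assume "\<not> ?thesis"
      then have "n + 1 \<le> length (filter (\<lambda>x. \<epsilon> \<le> \<bar>x - m\<bar>) ?xs)"
        by (intro median_deviation_count) (auto simp: sample_median_odd_def)
      also have "\<dots> = card {i\<in>{1..<2*n+2}. \<epsilon> \<le> \<bar>X i w - m\<bar>}"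
      proof -
        have "{i. \<epsilon> \<le> \<bar>X i w - m\<bar>} \<inter> set [1..<2*n+2] = {i\<in>{1..<2*n+2}. \<epsilon> \<le> \<bar>X i w - m\<bar>}"
          by auto
        then show ?thesis
          by (simp only: filter_map length_map comp_def distinct_length_filter[OF distinct_upt])
      qed
      also have "\<dots> < K"
        using K[of "{1..<2*n+2}" w] w by fastforce
      finally show False using n by simp
    qed
  qed
qed

lemma sample_median_modal: "membership \<pi> (sample_median_odd X n) m = 1"
proof (rule modal_statistic[of "{1..<2*n+2}"])
  fix \<omega> assume "\<forall>i\<in>{1..<2*n+2}. X i \<omega> = m"
  then have "map (\<lambda>i. X i \<omega>) [1..<2*n+2] = map (\<lambda>i. m) [1..<2*n+2]"
    by (intro map_cong) auto
  also have "\<dots> = replicate (2*n+1) m"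
    by (simp add: map_replicate_const)
  finally have sample: "map (\<lambda>i. X i \<omega>) [1..<2*n+2] = replicate (2*n+1) m" .
  show "sample_median_odd X n \<omega> = m"
    unfolding sample_median_odd_def sample sort_replicate by (rule nth_replicate) simp
qed auto

end

theorem mainTheorem10:
  fixes T :: "real \<Rightarrow> real \<Rightarrow> real"
    and A :: "real \<Rightarrow> real"
    and \<pi> :: "'w \<Rightarrow> real"
    and X :: "nat \<Rightarrow> 'w \<Rightarrow> real"
  assumes "continuous_archimedean_tnorm T"
    and "fuzzy_number A"
    and "poss_dist \<pi>"
    and "T_independent T \<pi> X"
    and "\<forall>n\<ge>1. membership \<pi> (X n) = A"
  shows "conv_distribution \<pi> (sample_mean X) (modal_value A) \<and>
         conv_measure \<pi> (sample_mean X) (modal_value A) \<and>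
         conv_almost_surely \<pi> (sample_mean X) (modal_value A) \<and>
         conv_distribution \<pi> (sample_median_odd X) (modal_value A) \<and>
         conv_measure \<pi> (sample_median_odd X) (modal_value A) \<and>
         conv_almost_surely \<pi> (sample_median_odd X) (modal_value A)"
proof -
  interpret T_independent_copies T A \<pi> X
    using assms by unfold_locales
  have mean_modal: "\<forall>\<^sub>F n in sequentially. membership \<pi> (sample_mean X n) m = 1"
    using sample_mean_modal by (intro eventually_sequentiallyI)
  have median_modal: "\<forall>\<^sub>F n in sequentially. membership \<pi> (sample_median_odd X n) m = 1"
    using sample_median_modal by simp
  show ?thesis
    using sample_mean_levelwise sample_median_levelwise mean_modal median_modal poss
      levelwise_conv_imp_conv_distribution levelwise_conv_imp_conv_measure
      levelwise_conv_imp_conv_almost_surely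
    by blast
qed

end
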